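(* Let $n\ge1$ and let $A$ be a set with an $(n+1)$-ary operation $\theta$, binary operations $\alpha_1,\dots,\alpha_n$ and an element $e\in A$ such that $\alpha_i(a,a)=e$ and $\theta(\alpha_1(a,b),\dots,\alpha_n(a,b),b)=a$ for all $a,b\in A$, and such that $\theta$ is 2-associative, i.e. $\theta(a_1,\dots,a_n,\theta(b_1,\dots,b_n,c))=\theta(\theta(a_1,\dots,a_n,b_1),\dots,\theta(a_1,\dots,a_n,b_n),c)$ for all elements. Then: (a) $\theta(a,a,\dots,a,e)=a$ for every $a\in A$; (b) for any $b,c\in A$ there is a unique $a\in A$ with $\theta(a,a,\dots,a,b)=c$; (c) for any $a,c\in A$ there is a unique $b\in A$ with $\theta(a,a,\dots,a,b)=c$.
   Context: $\theta(a,a,\dots,a,x)$ denotes $\theta$ with $a$ in the first $n$ arguments and $x$ in the last. *)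

theory Defs
  imports Main
begin

end

theory Submission
  imports Defs "HOL-Algebra.Group"
begin

text \<open>The diagonal operation \<open>a \<cdot> c = \<theta>(a,\<dots>,a,c)\<close> is associative by 2-associativity,
  has \<open>e\<close> as a left unit since \<open>\<theta>(e,\<dots>,e,c) = \<theta>(\<alpha>\<^sub>1(c,c),\<dots>,\<alpha>\<^sub>n(c,c),c) = c\<close>, and
  every \<open>\<theta>(a\<^sub>1,\<dots>,a\<^sub>n,c)\<close> equals \<open>\<theta>(a\<^sub>1,\<dots>,a\<^sub>n,e) \<cdot> c\<close>. Taking \<open>a\<^sub>i = \<alpha>\<^sub>i(e,b)\<close> yields a
  left inverse of \<open>b\<close>, so \<open>(A, \<cdot>, e)\<close> is a group; (a)--(c) are the right unit law and
  unique solvability of \<open>x \<cdot> b = c\<close> and \<open>a \<cdot> x = c\<close>.\<close>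

locale two_associative_with_division =
  fixes n :: nat
    and \<theta> :: "'a list \<Rightarrow> 'a \<Rightarrow> 'a"
    and \<alpha> :: "nat \<Rightarrow> 'a \<Rightarrow> 'a \<Rightarrow> 'a"
    and e :: 'a
  assumes alpha_diag: "\<And>i a. i < n \<Longrightarrow> \<alpha> i a a = e"
    and theta_alpha: "\<And>a b. \<theta> (map (\<lambda>i. \<alpha> i a b) [0..<n]) b = a"
    and assoc2: "\<And>as bs c. length as = n \<Longrightarrow> length bs = n \<Longrightarrow>
        \<theta> as (\<theta> bs c) = \<theta> (map (\<lambda>b. \<theta> as b) bs) c"
begin

definition diag :: "'a \<Rightarrow> 'a \<Rightarrow> 'a" where
  "diag a c = \<theta> (replicate n a) c"

definition diag_group :: "'a monoid" where
  "diag_group = \<lparr>carrier = UNIV, mult = diag, one = e\<rparr>"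

lemma diag_assoc: "diag (diag a b) c = diag a (diag b c)"
  using assoc2[of "replicate n a" "replicate n b" c] by (simp add: diag_def)

lemma alpha_diag_list: "map (\<lambda>i. \<alpha> i a a) [0..<n] = replicate n e"
  by (rule nth_equalityI) (simp_all add: alpha_diag)

lemma diag_left_unit: "diag e c = c"
  using theta_alpha[of c c] by (simp add: alpha_diag_list diag_def)

lemma theta_eq_diag: "length as = n \<Longrightarrow> \<theta> as c = diag (\<theta> as e) c"
  using assoc2[of as "replicate n e" c] diag_left_unit by (simp add: diag_def)

lemma diag_left_inverse: "diag (\<theta> (map (\<lambda>i. \<alpha> i e b) [0..<n]) e) b = e"
  using theta_eq_diag[of "map (\<lambda>i. \<alpha> i e b) [0..<n]" b] by (simp add: theta_alpha)

lemma group_diag_group: "group diag_group"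
proof (rule groupI)
  show "\<exists>y \<in> carrier diag_group. y \<otimes>\<^bsub>diag_group\<^esub> b = \<one>\<^bsub>diag_group\<^esub>" for b
    using diag_left_inverse by (auto simp: diag_group_def)
qed (simp_all add: diag_group_def diag_assoc diag_left_unit)

end

theorem corollary4p5:
  fixes n :: nat
    and \<theta> :: "'a list \<Rightarrow> 'a \<Rightarrow> 'a"
    and \<alpha> :: "nat \<Rightarrow> 'a \<Rightarrow> 'a \<Rightarrow> 'a"
    and e :: 'a
  assumes n: "n \<ge> 1"
    and alpha_diag: "\<And>i a. i < n \<Longrightarrow> \<alpha> i a a = e"
    and theta_alpha: "\<And>a b. \<theta> (map (\<lambda>i. \<alpha> i a b) [0..<n]) b = a"
    and assoc2: "\<And>as bs c. length as = n \<Longrightarrow> length bs = n \<Longrightarrow>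
        \<theta> as (\<theta> bs c) = \<theta> (map (\<lambda>b. \<theta> as b) bs) c"
  shows "(\<forall>a. \<theta> (replicate n a) e = a)
       \<and> (\<forall>b c. \<exists>!a. \<theta> (replicate n a) b = c)
       \<and> (\<forall>a c. \<exists>!b. \<theta> (replicate n a) b = c)"
proof -
  interpret two_associative_with_division n \<theta> \<alpha> e
    using alpha_diag theta_alpha assoc2 by unfold_locales
  interpret G: group diag_group
    by (rule group_diag_group)
  have diag: "\<theta> (replicate n a) b = a \<otimes>\<^bsub>diag_group\<^esub> b" for a b
    by (simp add: diag_group_def diag_def)
  have carrier: "x \<in> carrier diag_group" for x
    by (simp add: diag_group_def)
  show ?thesis
    unfolding diag
  proof (intro conjI allI)
    show "a \<otimes>\<^bsub>diag_group\<^esub> e = a" for a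
      using G.r_one[OF carrier] by (simp add: diag_group_def)
    show "\<exists>!a. a \<otimes>\<^bsub>diag_group\<^esub> b = c" for b c
      using G.inv_solve_right'[OF carrier carrier carrier] by metis
    show "\<exists>!b. a \<otimes>\<^bsub>diag_group\<^esub> b = c" for a c
      using G.inv_solve_left'[OF carrier carrier carrier] by metis
  qed
qed

end
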